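(* Assume $\lambda\mathbb{E}[Y_1]>\rho$ and $\delta>0$. For $T>0$ and $x>0$ let $V(x;T)=\sup_{D\in\mathcal{D}}\mathbb{E}_x\left[\int_0^{T\wedge\tau}e^{-\delta t}dD_t\right]$. Then for all $T>0$, $$\left|V(x;T)-\sup_{D\in\mathcal{D}}\mathbb{E}_x\left[\int_0^{\tau}e^{-\delta t}dD_t\right]\right|\le (x+\lambda\mathbb{E}[Y_1]T)e^{-\delta T}+\frac{\lambda\mathbb{E}[Y_1]}{\delta}e^{-\delta T}.$$
   Context: Dual risk model: $\rho>0$, $\lambda>0$; $N_t$ is a Poisson process with intensity $\lambda$ and $J_t=\sum_{i=1}^{N_t}Y_i$, where $Y_i$ are i.i.d. positive random variables with common density $p(y)$, $y>0$, independent of $N$. Given a dividend strategy $D$, the surplus is $X_t=x-\rho t-D_t+J_t$, $X_0=x>0$. $\mathcal{D}$ is the set of admissible dividend strategies: all adapted nondecreasing càdlàg processes $D$ ($D_t$ is the cumulative dividend paid up to time $t$). The ruin time is $\tau=\inf\{t>0:X_t\le 0\}$. $\mathbb{E}_x$ denotes expectation with $X_0=x$. *)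

theory Defs
  imports "HOL-Probability.Probability"
begin

definition arrival_count :: "(nat \<Rightarrow> 'a \<Rightarrow> real) \<Rightarrow> real \<Rightarrow> 'a \<Rightarrow> nat" where
  "arrival_count W t \<omega> = card {n::nat. 1 \<le> n \<and> (\<Sum>i<n. W i \<omega>) \<le> t}"

definition comp_poisson ::
  "(nat \<Rightarrow> 'a \<Rightarrow> real) \<Rightarrow> (nat \<Rightarrow> 'a \<Rightarrow> real) \<Rightarrow> real \<Rightarrow> 'a \<Rightarrow> real" where
  "comp_poisson W Y t \<omega> = (\<Sum>i<arrival_count W t \<omega>. Y i \<omega>)"

definition surplus ::
  "(nat \<Rightarrow> 'a \<Rightarrow> real) \<Rightarrow> (nat \<Rightarrow> 'a \<Rightarrow> real) \<Rightarrow> real \<Rightarrow> real \<Rightarrow> (real \<Rightarrow> 'a \<Rightarrow> real)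
    \<Rightarrow> real \<Rightarrow> 'a \<Rightarrow> real" where
  "surplus W Y \<rho> x D t \<omega> = x - \<rho> * t - D t \<omega> + comp_poisson W Y t \<omega>"

definition ruin_time :: "(real \<Rightarrow> 'a \<Rightarrow> real) \<Rightarrow> 'a \<Rightarrow> ereal" where
  "ruin_time X \<omega> = Inf {ereal t | t. 0 < t \<and> X t \<omega> \<le> 0}"

definition nat_filtration ::
  "'a measure \<Rightarrow> (nat \<Rightarrow> 'a \<Rightarrow> real) \<Rightarrow> (nat \<Rightarrow> 'a \<Rightarrow> real) \<Rightarrow> real \<Rightarrow> 'a measure" where
  "nat_filtration M W Y t = sigma (space M)
     ({(\<lambda>\<omega>. real (arrival_count W s \<omega>)) -` A \<inter> space M | s A. 0 \<le> s \<and> s \<le> t \<and> A \<in> sets borel}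
      \<union> {comp_poisson W Y s -` A \<inter> space M | s A. 0 \<le> s \<and> s \<le> t \<and> A \<in> sets borel})"

text \<open>Admissible dividend strategies: adapted, nonnegative, nondecreasing, right-continuous
  (left limits exist by monotonicity) cumulative dividend processes with D_(0-) = 0,
  such that a dividend payment never drives the surplus below 0 (X_t >= 0 for t <= tau).\<close>
definition admissible ::
  "'a measure \<Rightarrow> (nat \<Rightarrow> 'a \<Rightarrow> real) \<Rightarrow> (nat \<Rightarrow> 'a \<Rightarrow> real) \<Rightarrow> real \<Rightarrow> real
     \<Rightarrow> (real \<Rightarrow> 'a \<Rightarrow> real) set" where
  "admissible M W Y \<rho> x = {D.
     (\<forall>t\<ge>0. D t \<in> borel_measurable (nat_filtration M W Y t)) \<and>
     (\<forall>\<omega>\<in>space M.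
        0 \<le> D 0 \<omega> \<and> mono_on {0..} (\<lambda>t. D t \<omega>) \<and>
        (\<forall>t\<ge>0. continuous (at_right t) (\<lambda>s. D s \<omega>)) \<and>
        (\<forall>t\<ge>0. ereal t \<le> ruin_time (surplus W Y \<rho> x D) \<omega> \<longrightarrow> 0 \<le> surplus W Y \<rho> x D t \<omega>))}"

text \<open>Lebesgue--Stieltjes measure dD of a path (with D_(0-) = 0, so an initial lump D_0 sits at 0).\<close>
definition div_measure :: "(real \<Rightarrow> 'a \<Rightarrow> real) \<Rightarrow> 'a \<Rightarrow> real measure" where
  "div_measure D \<omega> = interval_measure (\<lambda>t. if t < 0 then 0 else D t \<omega>)"

definition disc_dividends :: "real \<Rightarrow> (real \<Rightarrow> 'a \<Rightarrow> real) \<Rightarrow> ereal \<Rightarrow> 'a \<Rightarrow> ennreal" where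
  "disc_dividends \<delta> D S \<omega> =
     (\<integral>\<^sup>+ t \<in> {t. 0 \<le> t \<and> ereal t \<le> S}. ennreal (exp (- \<delta> * t)) \<partial>div_measure D \<omega>)"

text \<open>Value function with horizon H (H = T gives V(x;T), H = infinity gives the infinite-horizon value):
  sup over admissible D of E_x[ integral_[0, tau /\ H] e^(-delta t) dD_t ].\<close>
definition value_fn ::
  "'a measure \<Rightarrow> (nat \<Rightarrow> 'a \<Rightarrow> real) \<Rightarrow> (nat \<Rightarrow> 'a \<Rightarrow> real) \<Rightarrow> real \<Rightarrow> real \<Rightarrow> real \<Rightarrow> ereal
     \<Rightarrow> ennreal" where
  "value_fn M W Y \<rho> \<delta> x H = (SUP D \<in> admissible M W Y \<rho> x.
      \<integral>\<^sup>+ \<omega>. disc_dividends \<delta> D (min (ruin_time (surplus W Y \<rho> x D) \<omega>) H) \<omega> \<partial>M)"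

end

theory Submission
  imports Defs "HOL-Real_Asymp.Real_Asymp"
begin

text \<open>
  Truncating a strategy at the horizon T loses only the dividends it pays in (T, \<tau>].
  Writing e^{-\<delta>t} = \<integral>_t^\<infinity> \<delta> e^{-\<delta>u} du and using Fubini, these discounted payments equal
  \<integral>_T^\<infinity> \<delta> e^{-\<delta>u} D((T, min(u, \<tau>)]) du. Admissibility keeps the surplus nonnegative up to
  ruin, so the dividends paid by time v \<le> \<tau> are at most x + J_v. Finally E J_u = \<lambda> E[Y] u,
  because the i-th claim has arrived by time u with the Erlang probability of the (i+1)-st
  arrival, and these probabilities sum to \<lambda>u. Integrating the linear bound against
  \<delta> e^{-\<delta>u} over [T, \<infinity>) gives the stated error term.
\<close>

text \<open>Only h must be measurable: the discounted dividends of an arbitrary strategy need not be.\<close>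

lemma nn_integral_add_le:
  assumes [measurable]: "h \<in> borel_measurable M"
  shows "(\<integral>\<^sup>+x. g x + h x \<partial>M) \<le> integral\<^sup>N M g + integral\<^sup>N M h"
proof -
  have "integral\<^sup>S M s \<le> integral\<^sup>N M g + integral\<^sup>N M h"
    if s: "simple_function M s" "s \<le> (\<lambda>x. g x + h x)" "\<forall>x. s x < top" for s
  proof -
    have [measurable]: "s \<in> borel_measurable M"
      using s(1) by (rule borel_measurable_simple_function)
    have "integral\<^sup>S M s = integral\<^sup>N M s"
      using s(1) by (simp add: nn_integral_eq_simple_integral)
    also have "\<dots> \<le> (\<integral>\<^sup>+x. (s x - h x) + h x \<partial>M)"
      by (intro nn_integral_mono) (metis add.commute diff_le_self_ennreal le_iff_add order.refl
              ennreal_minus_le_iff diff_add_self_ennreal)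
    also have "\<dots> = (\<integral>\<^sup>+x. s x - h x \<partial>M) + integral\<^sup>N M h"
      by (rule nn_integral_add) auto
    also have "(\<integral>\<^sup>+x. s x - h x \<partial>M) \<le> integral\<^sup>N M g"
    proof (intro nn_integral_mono)
      fix x
      have "s x \<le> g x + h x" using s(2) by (auto simp: le_fun_def)
      then show "s x - h x \<le> g x"
        using s(3) by (auto simp: ennreal_minus_le_iff add.commute dest: spec[of _ x])
    qed
    finally show ?thesis by (simp add: add_right_mono)
  qed
  then show ?thesis
    unfolding nn_integral_def_finite[of M "\<lambda>x. g x + h x"] by (intro SUP_least) auto
qed

lemma ennreal_exp_eq_nn_integral_tail:
  fixes \<delta> t :: real
  assumes "\<delta> > 0"
  shows "ennreal (exp (- \<delta> * t))
    = (\<integral>\<^sup>+u. ennreal (\<delta> * exp (- \<delta> * u)) * indicator {t..} u \<partial>lborel)"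
proof -
  have "(\<integral>\<^sup>+u. ennreal (\<delta> * exp (- \<delta> * u)) * indicator {t..} u \<partial>lborel) = 0 - (- exp (- \<delta> * t))"
  proof (rule nn_integral_FTC_atLeast)
    show "((\<lambda>u. - exp (- \<delta> * u)) has_real_derivative \<delta> * exp (- \<delta> * u)) (at u)" for u
      by (auto intro!: derivative_eq_intros)
    show "((\<lambda>u. - exp (- \<delta> * u)) \<longlongrightarrow> 0) at_top"
      using assms by real_asymp
  qed (use assms in auto)
  then show ?thesis by simp
qed

lemma nn_integral_exp_affine_tail:
  fixes \<delta> T x m :: real
  assumes "\<delta> > 0" "x \<ge> 0" "m \<ge> 0" "T \<ge> 0"
  shows "(\<integral>\<^sup>+u. ennreal (\<delta> * exp (- \<delta> * u) * (x + m * u)) * indicator {T..} u \<partial>lborel)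
     = ennreal ((x + m * T) * exp (- \<delta> * T) + m / \<delta> * exp (- \<delta> * T))"
proof -
  define F where "F u = - exp (- \<delta> * u) * (x + m * u) - m / \<delta> * exp (- \<delta> * u)" for u
  have "(\<integral>\<^sup>+u. ennreal (\<delta> * exp (- \<delta> * u) * (x + m * u)) * indicator {T..} u \<partial>lborel) = 0 - F T"
  proof (rule nn_integral_FTC_atLeast)
    show "(F has_real_derivative \<delta> * exp (- \<delta> * u) * (x + m * u)) (at u)" for u
      unfolding F_def using assms by (auto intro!: derivative_eq_intros simp: field_simps)
    show "0 \<le> \<delta> * exp (- \<delta> * u) * (x + m * u)" if "T \<le> u" for u
      using assms that by simp
    show "(F \<longlongrightarrow> 0) at_top"
      unfolding F_def using assms by real_asymp
  qed simp
  then show ?thesis by (simp add: F_def algebra_simps)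
qed

lemma nn_integral_exp_indicator_eq_emeasure_atMost:
  fixes \<mu> :: "real measure" and \<delta> :: real
  assumes "sigma_finite_measure \<mu>" and sets_\<mu>: "sets \<mu> = sets borel"
    and A: "A \<in> sets borel" and \<delta>: "\<delta> > 0"
  shows "(\<integral>\<^sup>+t. ennreal (exp (- \<delta> * t)) * indicator A t \<partial>\<mu>)
    = (\<integral>\<^sup>+u. ennreal (\<delta> * exp (- \<delta> * u)) * emeasure \<mu> ({..u} \<inter> A) \<partial>lborel)"
proof -
  interpret \<mu>: sigma_finite_measure \<mu> by fact
  interpret pair_sigma_finite \<mu> lborel ..
  have [measurable_cong]: "sets \<mu> = sets borel" by (fact sets_\<mu>)
  have [measurable]: "Measurable.pred (\<mu> \<Otimes>\<^sub>M lborel) (\<lambda>z. fst z \<le> snd z)"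
    by measurable
  have [measurable]: "(\<lambda>z. indicator A (fst z) :: ennreal) \<in> borel_measurable (\<mu> \<Otimes>\<^sub>M lborel)"
    using A by (intro measurable_compose[OF measurable_fst]) (simp add: sets_\<mu>)
  have "(\<integral>\<^sup>+t. ennreal (exp (- \<delta> * t)) * indicator A t \<partial>\<mu>)
      = (\<integral>\<^sup>+t. (\<integral>\<^sup>+u. ennreal (\<delta> * exp (- \<delta> * u)) * indicator {t..} u * indicator A t \<partial>lborel) \<partial>\<mu>)"
    by (subst ennreal_exp_eq_nn_integral_tail[OF \<delta>]) (simp add: nn_integral_multc)
  also have "\<dots> = (\<integral>\<^sup>+u. (\<integral>\<^sup>+t. ennreal (\<delta> * exp (- \<delta> * u)) * indicator {t..} u * indicator A t \<partial>\<mu>) \<partial>lborel)"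
  proof (rule Fubini'[symmetric])
    have indicator_le: "(\<lambda>z. indicator {fst z..} (snd z) :: ennreal) = (\<lambda>z. if fst z \<le> snd z then 1 else 0)"
      by (auto simp: fun_eq_iff split: split_indicator)
    have [measurable]: "(\<lambda>z. indicator {fst z..} (snd z) :: ennreal) \<in> borel_measurable (\<mu> \<Otimes>\<^sub>M lborel)"
      unfolding indicator_le by measurable
    show "(\<lambda>(t, u). ennreal (\<delta> * exp (- \<delta> * u)) * indicator {t..} u * indicator A t)
        \<in> borel_measurable (\<mu> \<Otimes>\<^sub>M lborel)"
      by (simp add: case_prod_beta') measurable
  qed
  also have "\<dots> = (\<integral>\<^sup>+u. ennreal (\<delta> * exp (- \<delta> * u)) * emeasure \<mu> ({..u} \<inter> A) \<partial>lborel)"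
  proof (intro nn_integral_cong)
    fix u :: real
    have "(\<integral>\<^sup>+t. ennreal (\<delta> * exp (- \<delta> * u)) * indicator {t..} u * indicator A t \<partial>\<mu>)
       = (\<integral>\<^sup>+t. ennreal (\<delta> * exp (- \<delta> * u)) * indicator ({..u} \<inter> A) t \<partial>\<mu>)"
      by (intro nn_integral_cong) (auto split: split_indicator)
    then show "(\<integral>\<^sup>+t. ennreal (\<delta> * exp (- \<delta> * u)) * indicator {t..} u * indicator A t \<partial>\<mu>)
       = ennreal (\<delta> * exp (- \<delta> * u)) * emeasure \<mu> ({..u} \<inter> A)"
      using A by (simp add: nn_integral_cmult_indicator sets_\<mu>)
  qed
  finally show ?thesis .
qed

lemma (in prob_space) indep_var_nn_integral:
  fixes X Z :: "'a \<Rightarrow> ennreal"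
  assumes "indep_var borel X borel Z"
  shows "(\<integral>\<^sup>+\<omega>. X \<omega> * Z \<omega> \<partial>M) = (\<integral>\<^sup>+\<omega>. X \<omega> \<partial>M) * (\<integral>\<^sup>+\<omega>. Z \<omega> \<partial>M)"
proof -
  have "case_bool borel borel = (\<lambda>_::bool. (borel :: ennreal measure))"
    by (auto simp: fun_eq_iff split: bool.split)
  then have "indep_vars (\<lambda>_. borel) (case_bool X Z) UNIV"
    using assms unfolding indep_var_def by simp
  then have "(\<integral>\<^sup>+\<omega>. (\<Prod>b\<in>UNIV. case_bool X Z b \<omega>) \<partial>M) = (\<Prod>b\<in>UNIV. \<integral>\<^sup>+\<omega>. case_bool X Z b \<omega> \<partial>M)"
    by (intro indep_vars_nn_integral) auto
  then show ?thesis by (simp add: UNIV_bool mult.commute)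
qed

lemma distributed_AE_nonneg:
  fixes X :: "'a \<Rightarrow> real"
  assumes d: "distributed M lborel X f" and f: "\<And>y. y < 0 \<Longrightarrow> f y = 0"
  shows "AE \<omega> in M. 0 \<le> X \<omega>"
proof -
  have [measurable]: "X \<in> borel_measurable M" using distributed_measurable[OF d] by simp
  have "emeasure M (X -` {..<0} \<inter> space M) = (\<integral>\<^sup>+y. f y * indicator {..<0} y \<partial>lborel)"
    by (rule distributed_emeasure[OF d]) simp
  also have "\<dots> = 0" by (intro nn_integral_zero') (auto simp: f split: split_indicator)
  finally have "emeasure M {\<omega>\<in>space M. \<not> 0 \<le> X \<omega>} = 0"
    by (simp add: vimage_def Int_def not_le conj_commute)
  then show ?thesis by (subst AE_iff_measurable[OF _ refl]) auto
qed

lemma distributed_nn_integral_eq: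
  fixes X Z :: "'a \<Rightarrow> real"
  assumes dX: "distributed M lborel X f" and dZ: "distributed M lborel Z f"
  shows "(\<integral>\<^sup>+\<omega>. ennreal (X \<omega>) \<partial>M) = (\<integral>\<^sup>+\<omega>. ennreal (Z \<omega>) \<partial>M)"
proof -
  have [measurable]: "X \<in> borel_measurable M" "Z \<in> borel_measurable M"
    using distributed_measurable[OF dX] distributed_measurable[OF dZ] by auto
  have "(\<integral>\<^sup>+\<omega>. ennreal (X \<omega>) \<partial>M) = (\<integral>\<^sup>+y. ennreal y \<partial>distr M lborel X)"
    by (subst nn_integral_distr) auto
  also have "distr M lborel X = distr M lborel Z"
    using distributed_distr_eq_density[OF dX] distributed_distr_eq_density[OF dZ] by simp
  also have "(\<integral>\<^sup>+y. ennreal y \<partial>distr M lborel Z) = (\<integral>\<^sup>+\<omega>. ennreal (Z \<omega>) \<partial>M)"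
    by (subst nn_integral_distr) auto
  finally show ?thesis .
qed

lemma suminf_erlang_density:
  fixes l s :: real
  assumes "l > 0" "s \<ge> 0"
  shows "(\<Sum>n. ennreal (erlang_density n l s)) = ennreal l"
proof -
  have "(\<lambda>n. (l * s) ^ n / fact n) sums exp (l * s)"
    using exp_converges[of "l * s"] by (simp add: divide_inverse mult.commute scaleR_conv_of_real)
  then have "(\<lambda>n. l * exp (- l * s) * ((l * s) ^ n / fact n)) sums (l * exp (- l * s) * exp (l * s))"
    by (rule sums_mult)
  moreover have "l * exp (- l * s) * exp (l * s) = l"
    by (simp add: exp_minus field_simps)
  moreover have "l * exp (- l * s) * ((l * s) ^ n / fact n) = erlang_density n l s" for n
    using assms by (simp add: erlang_density_def power_mult_distrib field_simps)
  ultimately have "(\<lambda>n. erlang_density n l s) sums l"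
    by (metis (no_types, lifting) sums_cong)
  then show ?thesis
    by (intro suminf_ennreal_eq) (use assms in auto)
qed

lemma suminf_erlang_CDF:
  fixes l u :: real
  assumes "l > 0" "u \<ge> 0"
  shows "(\<Sum>n. ennreal (erlang_CDF n l u)) = ennreal (l * u)"
proof -
  have "(\<Sum>n. ennreal (erlang_CDF n l u))
      = (\<Sum>n. \<integral>\<^sup>+s. ennreal (erlang_density n l s) * indicator {..u} s \<partial>lborel)"
    using nn_integral_erlang_density[OF assms(1)] by simp
  also have "\<dots> = (\<integral>\<^sup>+s. (\<Sum>n. ennreal (erlang_density n l s) * indicator {..u} s) \<partial>lborel)"
    by (rule nn_integral_suminf[symmetric]) measurable
  also have "\<dots> = (\<integral>\<^sup>+s. ennreal l * indicator {0..u} s \<partial>lborel)"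
  proof (intro nn_integral_cong)
    fix s :: real
    show "(\<Sum>n. ennreal (erlang_density n l s) * indicator {..u} s) = ennreal l * indicator {0..u} s"
      using suminf_erlang_density[OF assms(1), of s]
      by (cases "0 \<le> s") (auto simp: erlang_density_def ennreal_suminf_multc split: split_indicator)
  qed
  also have "\<dots> = ennreal (l * u)"
    using assms by (simp add: nn_integral_cmult_indicator ennreal_mult)
  finally show ?thesis .
qed

text \<open>
  Unlike comp_poisson, whose arrival count is a cardinality (and 0 for infinite sets), this
  series is measurable and can be integrated term by term; it dominates J_v for v \<le> u.
\<close>

definition claims_upto :: "(nat \<Rightarrow> 'a \<Rightarrow> real) \<Rightarrow> (nat \<Rightarrow> 'a \<Rightarrow> real) \<Rightarrow> real \<Rightarrow> 'a \<Rightarrow> ennreal" where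
  "claims_upto W Y u \<omega> = (\<Sum>i. ennreal (Y i \<omega>) * indicator {..u} (\<Sum>j<Suc i. W j \<omega>))"

lemma comp_poisson_le_claims_upto:
  assumes W: "\<And>i. W i \<omega> \<ge> 0" and Y: "\<And>i. Y i \<omega> \<ge> 0" and "v \<le> u"
  shows "ennreal (comp_poisson W Y v \<omega>) \<le> claims_upto W Y u \<omega>"
proof -
  define A where "A = {n::nat. 1 \<le> n \<and> (\<Sum>i<n. W i \<omega>) \<le> v}"
  have arrival_count_eq: "arrival_count W v \<omega> = card A"
    by (simp add: arrival_count_def A_def)
  have arrivals_mono: "(\<Sum>i<m. W i \<omega>) \<le> (\<Sum>i<n. W i \<omega>)" if "m \<le> n" for m n
    using that W by (intro sum_mono2) auto
  show ?thesis
  proof (cases "finite A")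
    case False
    then show ?thesis by (simp add: comp_poisson_def arrival_count_eq)
  next
    case True
    have arrival_in_A: "Suc i \<in> A" if "i < card A" for i
    proof (rule ccontr)
      assume "Suc i \<notin> A"
      have "A \<subseteq> {1..i}"
      proof
        fix n assume "n \<in> A"
        with \<open>Suc i \<notin> A\<close> arrivals_mono[of "Suc i" n] show "n \<in> {1..i}"
          by (auto simp: A_def) (meson not_less_eq_eq)
      qed
      then have "card A \<le> i" using card_mono[of "{1..i}" A] by simp
      with that show False by simp
    qed
    have arrived: "(\<Sum>j<Suc i. W j \<omega>) \<le> u" if "i < card A" for i
      using arrival_in_A[OF that] \<open>v \<le> u\<close> by (auto simp: A_def)
    have "ennreal (comp_poisson W Y v \<omega>) = (\<Sum>i<card A. ennreal (Y i \<omega>))"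
      using Y by (simp add: comp_poisson_def arrival_count_eq sum_ennreal)
    also have "\<dots> = (\<Sum>i<card A. ennreal (Y i \<omega>) * indicator {..u} (\<Sum>j<Suc i. W j \<omega>))"
      using arrived by (intro sum.cong) auto
    also have "\<dots> \<le> claims_upto W Y u \<omega>"
      unfolding claims_upto_def by (rule sum_le_suminf) auto
    finally show ?thesis .
  qed
qed

lemma admissible_dividend_path:
  assumes D: "D \<in> admissible M W Y \<rho> x" and \<omega>: "\<omega> \<in> space M"
  defines "F \<equiv> \<lambda>t. if t < 0 then 0 else D t \<omega>"
  shows "mono F" and "continuous (at_right a) F"
proof -
  have D0: "0 \<le> D 0 \<omega>" and mo: "mono_on {0..} (\<lambda>t. D t \<omega>)"
    and rc: "\<And>t. t \<ge> 0 \<Longrightarrow> continuous (at_right t) (\<lambda>s. D s \<omega>)"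
    using D \<omega> by (auto simp: admissible_def)
  show "mono F"
  proof
    fix a b :: real assume "a \<le> b"
    have "0 \<le> D b \<omega>" if "0 \<le> b"
      using mo D0 that unfolding mono_on_def by (metis atLeast_iff order_refl order_trans)
    then show "F a \<le> F b" using \<open>a \<le> b\<close> mo by (auto simp: F_def mono_on_def)
  qed
  show "continuous (at_right a) F"
  proof (cases "a < 0")
    case True
    then have "eventually (\<lambda>s. F s = 0) (at_right a)"
      unfolding eventually_at_right[OF True] by (auto simp: F_def intro!: exI[of _ 0])
    then have "(F \<longlongrightarrow> 0) (at_right a)"
      by (rule tendsto_cong[THEN iffD2]) simp
    then show ?thesis using True by (simp add: continuous_within F_def)
  next
    case False
    then have "eventually (\<lambda>s. D s \<omega> = F s) (at_right a)"
      by (auto simp: F_def eventually_at_filter intro: eventually_mono[OF eventually_at_right_less])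
    moreover have "((\<lambda>s. D s \<omega>) \<longlongrightarrow> D a \<omega>) (at_right a)"
      using rc[of a] False by (simp add: continuous_within)
    ultimately have "(F \<longlongrightarrow> D a \<omega>) (at_right a)" by (rule tendsto_cong[THEN iffD1])
    then show ?thesis using False by (simp add: continuous_within F_def)
  qed
qed

lemma
  assumes "D \<in> admissible M W Y \<rho> x" and "\<omega> \<in> space M"
  shows sigma_finite_div_measure: "sigma_finite_measure (div_measure D \<omega>)"
    and sets_div_measure: "sets (div_measure D \<omega>) = sets borel"
    and emeasure_div_measure_Ioc:
      "\<lbrakk>a < 0; 0 \<le> v\<rbrakk> \<Longrightarrow> emeasure (div_measure D \<omega>) {a<..v} = ennreal (D v \<omega>)"
  using admissible_dividend_path[OF assms]
  by (auto simp: div_measure_def mono_def emeasure_interval_measure_Ioc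
      intro: sigma_finite_interval_measure)

lemma admissible_dividends_le:
  assumes "D \<in> admissible M W Y \<rho> x" and "\<omega> \<in> space M" and "\<rho> \<ge> 0"
    and "0 \<le> v" and "ereal v \<le> ruin_time (surplus W Y \<rho> x D) \<omega>"
  shows "D v \<omega> \<le> x + comp_poisson W Y v \<omega>"
proof -
  have "0 \<le> surplus W Y \<rho> x D v \<omega>"
    using assms unfolding admissible_def by auto
  moreover have "0 \<le> \<rho> * v" using assms by simp
  ultimately show ?thesis by (simp add: surplus_def)
qed

lemma emeasure_div_measure_after_horizon:
  assumes D: "D \<in> admissible M W Y \<rho> x" and \<omega>: "\<omega> \<in> space M"
    and W: "\<And>i. W i \<omega> \<ge> 0" and Y: "\<And>i. Y i \<omega> \<ge> 0" and "\<rho> \<ge> 0" and "T \<ge> 0"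
  defines "\<tau> \<equiv> ruin_time (surplus W Y \<rho> x D) \<omega>"
  shows "emeasure (div_measure D \<omega>) ({..u} \<inter> {t. T < t \<and> ereal t \<le> \<tau>})
    \<le> indicator {T..} u * (ennreal x + claims_upto W Y u \<omega>)"
proof (cases "T \<le> u \<and> ereal T < \<tau>")
  case False
  then have "{..u} \<inter> {t. T < t \<and> ereal t \<le> \<tau>} = {}"
    by (cases \<tau>) auto
  then show ?thesis by simp
next
  case True
  define v where "v = (if ereal u \<le> \<tau> then u else real_of_ereal \<tau>)"
  have v: "T \<le> v" "v \<le> u" "ereal v \<le> \<tau>" "{..u} \<inter> {t. T < t \<and> ereal t \<le> \<tau>} \<subseteq> {-1<..v}"
    using True \<open>T \<ge> 0\<close> by (cases \<tau>; auto simp: v_def)+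
  have "emeasure (div_measure D \<omega>) ({..u} \<inter> {t. T < t \<and> ereal t \<le> \<tau>})
      \<le> emeasure (div_measure D \<omega>) {-1<..v}"
    by (rule emeasure_mono[OF v(4)]) (simp add: sets_div_measure[OF D \<omega>])
  also have "\<dots> = ennreal (D v \<omega>)"
    using v \<open>T \<ge> 0\<close> by (intro emeasure_div_measure_Ioc[OF D \<omega>]) auto
  also have "\<dots> \<le> ennreal (x + comp_poisson W Y v \<omega>)"
    using v \<open>T \<ge> 0\<close> \<open>\<rho> \<ge> 0\<close> unfolding \<tau>_def
    by (intro ennreal_leI admissible_dividends_le[OF D \<omega>]) auto
  also have "\<dots> \<le> ennreal x + ennreal (comp_poisson W Y v \<omega>)"
    using Y by (simp add: ennreal_plus_if comp_poisson_def sum_nonneg)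
  also have "\<dots> \<le> ennreal x + claims_upto W Y u \<omega>"
    by (intro add_left_mono comp_poisson_le_claims_upto W Y v)
  finally show ?thesis using True by simp
qed

lemma disc_dividends_mono:
  "S \<le> S' \<Longrightarrow> disc_dividends \<delta> D S \<omega> \<le> disc_dividends \<delta> D S' \<omega>"
  unfolding disc_dividends_def
  by (intro nn_integral_mono) (auto split: split_indicator intro: order_trans)

definition dividend_tail_bound ::
  "real \<Rightarrow> real \<Rightarrow> real \<Rightarrow> (nat \<Rightarrow> 'a \<Rightarrow> real) \<Rightarrow> (nat \<Rightarrow> 'a \<Rightarrow> real) \<Rightarrow> 'a \<Rightarrow> ennreal" where
  "dividend_tail_bound \<delta> T x W Y \<omega> = (\<integral>\<^sup>+u. ennreal (\<delta> * exp (- \<delta> * u))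
      * (indicator {T..} u * (ennreal x + claims_upto W Y u \<omega>)) \<partial>lborel)"

lemma disc_dividends_le_horizon_add_tail:
  assumes D: "D \<in> admissible M W Y \<rho> x" and \<omega>: "\<omega> \<in> space M"
    and W: "\<And>i. W i \<omega> \<ge> 0" and Y: "\<And>i. Y i \<omega> \<ge> 0"
    and \<delta>: "\<delta> > 0" and \<rho>: "\<rho> \<ge> 0" and T: "T \<ge> 0"
  defines "\<tau> \<equiv> ruin_time (surplus W Y \<rho> x D) \<omega>"
  shows "disc_dividends \<delta> D \<tau> \<omega> \<le> disc_dividends \<delta> D (min \<tau> (ereal T)) \<omega>
     + dividend_tail_bound \<delta> T x W Y \<omega>"
proof -
  define \<mu> where "\<mu> = div_measure D \<omega>"
  define A where "A = {t. T < t \<and> ereal t \<le> \<tau>}"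
  have [measurable_cong]: "sets \<mu> = sets borel"
    unfolding \<mu>_def by (rule sets_div_measure[OF D \<omega>])
  have [measurable]: "A \<in> sets borel" "{t. 0 \<le> t \<and> ereal t \<le> S} \<in> sets borel" for S
    unfolding A_def by measurable
  have "disc_dividends \<delta> D \<tau> \<omega>
      \<le> (\<integral>\<^sup>+t. ennreal (exp (- \<delta> * t)) * indicator {t. 0 \<le> t \<and> ereal t \<le> min \<tau> (ereal T)} t
          + ennreal (exp (- \<delta> * t)) * indicator A t \<partial>\<mu>)"
    unfolding disc_dividends_def \<mu>_def[symmetric]
    by (intro nn_integral_mono) (auto simp: A_def split: split_indicator)
  also have "\<dots> = disc_dividends \<delta> D (min \<tau> (ereal T)) \<omega>
      + (\<integral>\<^sup>+t. ennreal (exp (- \<delta> * t)) * indicator A t \<partial>\<mu>)"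
    unfolding disc_dividends_def \<mu>_def[symmetric] by (rule nn_integral_add) auto
  also have "(\<integral>\<^sup>+t. ennreal (exp (- \<delta> * t)) * indicator A t \<partial>\<mu>)
      = (\<integral>\<^sup>+u. ennreal (\<delta> * exp (- \<delta> * u)) * emeasure \<mu> ({..u} \<inter> A) \<partial>lborel)"
    unfolding \<mu>_def using \<delta>
    by (intro nn_integral_exp_indicator_eq_emeasure_atMost sigma_finite_div_measure[OF D \<omega>]
        sets_div_measure[OF D \<omega>]) measurable
  also have "\<dots> \<le> (\<integral>\<^sup>+u. ennreal (\<delta> * exp (- \<delta> * u))
      * (indicator {T..} u * (ennreal x + claims_upto W Y u \<omega>)) \<partial>lborel)"
    unfolding \<mu>_def A_def \<tau>_def
    by (intro nn_integral_mono mult_left_mono emeasure_div_measure_after_horizon) (use assms in auto)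
  finally show ?thesis by (simp add: add_left_mono dividend_tail_bound_def)
qed

locale compound_poisson_model = prob_space M for M :: "'a measure" +
  fixes W Y :: "nat \<Rightarrow> 'a \<Rightarrow> real" and lam :: real and p :: "real \<Rightarrow> real"
  assumes lam_pos: "lam > 0"
    and indep_arrivals_claims:
      "indep_vars (\<lambda>_. borel) (\<lambda>k. case k of Inl i \<Rightarrow> W i | Inr i \<Rightarrow> Y i) (UNIV :: (nat + nat) set)"
    and distributed_W: "\<And>i. distributed M lborel (W i) (\<lambda>s. ennreal (exponential_density lam s))"
    and distributed_Y: "\<And>i. distributed M lborel (Y i) (\<lambda>y. ennreal (p y))"
    and density_nonpos: "\<And>y. y \<le> 0 \<Longrightarrow> p y = 0"
    and integrable_Y: "integrable M (Y 0)"
begin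

lemma measurable_W [measurable]: "W i \<in> borel_measurable M"
  using distributed_measurable[OF distributed_W] by simp

lemma measurable_Y [measurable]: "Y i \<in> borel_measurable M"
  using distributed_measurable[OF distributed_Y] by simp

lemma AE_nonneg: "AE \<omega> in M. \<forall>i. 0 \<le> W i \<omega> \<and> 0 \<le> Y i \<omega>"
  unfolding AE_all_countable
  by (intro allI AE_conjI distributed_AE_nonneg[OF distributed_W]
      distributed_AE_nonneg[OF distributed_Y]) (auto simp: exponential_density_def density_nonpos)

lemma nn_integral_Y: "(\<integral>\<^sup>+\<omega>. ennreal (Y i \<omega>) \<partial>M) = ennreal (expectation (Y 0))"
proof -
  have "AE \<omega> in M. 0 \<le> Y 0 \<omega>" using AE_nonneg by auto
  then show ?thesis
    using distributed_nn_integral_eq[OF distributed_Y distributed_Y, of i 0]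
    by (simp add: nn_integral_eq_integral[OF integrable_Y])
qed

lemma expectation_Y_nonneg: "0 \<le> expectation (Y 0)"
  using AE_nonneg by (intro integral_nonneg_AE) auto

lemma measurable_claims_upto [measurable]: "claims_upto W Y u \<in> borel_measurable M"
  unfolding claims_upto_def by measurable

lemma distributed_arrival_time:
  "distributed M lborel (\<lambda>\<omega>. \<Sum>j<Suc i. W j \<omega>) (erlang_density i lam)"
proof -
  define G where "G = (\<lambda>k. case k of Inl i \<Rightarrow> W i | Inr i \<Rightarrow> Y i)"
  have "indep_vars (\<lambda>_. borel) G (Inl ` {..<Suc i})"
    using indep_vars_subset[OF indep_arrivals_claims] by (simp add: G_def)
  moreover have "\<And>k. k \<in> Inl ` {..<Suc i} \<Longrightarrow>
      distributed M lborel (G k) (erlang_density ((\<lambda>_. 0) k) lam)"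
    using distributed_W by (auto simp: G_def)
  ultimately show ?thesis
    using erlang_distributed_sum[of "Inl ` {..<Suc i}" lam G "\<lambda>_. 0"] lam_pos
    by (simp add: G_def sum.reindex card_image lessThan_empty_iff)
qed

lemma nn_integral_claim_arrived:
  assumes "u \<ge> 0"
  shows "(\<integral>\<^sup>+\<omega>. ennreal (Y i \<omega>) * indicator {..u} (\<Sum>j<Suc i. W j \<omega>) \<partial>M)
       = ennreal (expectation (Y 0)) * ennreal (erlang_CDF i lam u)"
proof -
  define S where "S = (\<lambda>\<omega>. \<Sum>j<Suc i. W j \<omega>)"
  have [measurable]: "S \<in> borel_measurable M" unfolding S_def by measurable
  define G where "G = (\<lambda>k. case k of Inl i \<Rightarrow> W i | Inr i \<Rightarrow> Y i)"
  have "indep_var borel (G (Inr i)) borel (\<lambda>\<omega>. \<Sum>k\<in>Inl ` {..<Suc i}. G k \<omega>)"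
    using indep_vars_subset[OF indep_arrivals_claims]
    by (intro indep_vars_sum) (auto simp: G_def)
  then have "indep_var borel (Y i) borel S"
    by (simp add: G_def S_def sum.reindex)
  then have "indep_var borel ((\<lambda>y. ennreal y) \<circ> Y i) borel ((\<lambda>s. indicator {..u} s :: ennreal) \<circ> S)"
    by (rule indep_var_compose) auto
  then have "(\<integral>\<^sup>+\<omega>. ennreal (Y i \<omega>) * indicator {..u} (S \<omega>) \<partial>M)
      = (\<integral>\<^sup>+\<omega>. ennreal (Y i \<omega>) \<partial>M) * (\<integral>\<^sup>+\<omega>. indicator {..u} (S \<omega>) \<partial>M)"
    by (simp add: indep_var_nn_integral comp_def)
  also have "(\<integral>\<^sup>+\<omega>. indicator {..u} (S \<omega>) \<partial>M) = (\<integral>\<^sup>+\<omega>. indicator {\<omega>\<in>space M. S \<omega> \<le> u} \<omega> \<partial>M)"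
    by (intro nn_integral_cong) (auto split: split_indicator)
  also have "\<dots> = emeasure M {\<omega>\<in>space M. S \<omega> \<le> u}"
    by (rule nn_integral_indicator) measurable
  also have "\<dots> = ennreal (erlang_CDF i lam u)"
    using erlang_distributed_le[OF distributed_arrival_time lam_pos assms]
    by (simp add: emeasure_eq_measure S_def)
  finally show ?thesis by (simp add: S_def nn_integral_Y)
qed

lemma nn_integral_claims_upto:
  assumes "u \<ge> 0"
  shows "(\<integral>\<^sup>+\<omega>. claims_upto W Y u \<omega> \<partial>M) = ennreal (lam * expectation (Y 0) * u)"
proof -
  have "(\<integral>\<^sup>+\<omega>. claims_upto W Y u \<omega> \<partial>M)
      = (\<Sum>i. \<integral>\<^sup>+\<omega>. ennreal (Y i \<omega>) * indicator {..u} (\<Sum>j<Suc i. W j \<omega>) \<partial>M)"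
    unfolding claims_upto_def by (rule nn_integral_suminf) measurable
  also have "\<dots> = (\<Sum>i. ennreal (expectation (Y 0)) * ennreal (erlang_CDF i lam u))"
    by (simp only: nn_integral_claim_arrived[OF assms])
  also have "\<dots> = ennreal (expectation (Y 0)) * ennreal (lam * u)"
    by (simp only: ennreal_suminf_cmult suminf_erlang_CDF[OF lam_pos assms])
  finally show ?thesis
    using expectation_Y_nonneg lam_pos assms by (simp add: ennreal_mult[symmetric] mult_ac)
qed

lemma nn_integral_dividend_tail_bound:
  assumes "\<delta> > 0" "x \<ge> 0" "T \<ge> 0"
  shows "(\<integral>\<^sup>+\<omega>. dividend_tail_bound \<delta> T x W Y \<omega> \<partial>M)
     = ennreal ((x + lam * expectation (Y 0) * T) * exp (- \<delta> * T)
                + lam * expectation (Y 0) / \<delta> * exp (- \<delta> * T))"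
proof -
  interpret pair_sigma_finite lborel M ..
  have [measurable]: "Measurable.pred (borel \<Otimes>\<^sub>M M) (\<lambda>z. (\<Sum>j<Suc i. W j (snd z)) \<in> {..fst z})" for i
    by (simp only: atMost_iff) measurable
  have "(\<integral>\<^sup>+\<omega>. dividend_tail_bound \<delta> T x W Y \<omega> \<partial>M)
      = (\<integral>\<^sup>+u. (\<integral>\<^sup>+\<omega>. ennreal (\<delta> * exp (- \<delta> * u))
            * (indicator {T..} u * (ennreal x + claims_upto W Y u \<omega>)) \<partial>M) \<partial>lborel)"
    unfolding dividend_tail_bound_def by (rule Fubini') (unfold claims_upto_def, measurable)
  also have "\<dots> = (\<integral>\<^sup>+u. ennreal (\<delta> * exp (- \<delta> * u) * (x + lam * expectation (Y 0) * u))
      * indicator {T..} u \<partial>lborel)"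
  proof (intro nn_integral_cong)
    fix u :: real
    show "(\<integral>\<^sup>+\<omega>. ennreal (\<delta> * exp (- \<delta> * u)) * (indicator {T..} u * (ennreal x + claims_upto W Y u \<omega>)) \<partial>M)
      = ennreal (\<delta> * exp (- \<delta> * u) * (x + lam * expectation (Y 0) * u)) * indicator {T..} u"
    proof (cases "T \<le> u")
      case True
      then have u: "0 \<le> u" using assms by simp
      have "(\<integral>\<^sup>+\<omega>. ennreal (\<delta> * exp (- \<delta> * u)) * (indicator {T..} u * (ennreal x + claims_upto W Y u \<omega>)) \<partial>M)
          = ennreal (\<delta> * exp (- \<delta> * u)) * (\<integral>\<^sup>+\<omega>. ennreal x + claims_upto W Y u \<omega> \<partial>M)"
        using True by (simp add: nn_integral_cmult)
      also have "(\<integral>\<^sup>+\<omega>. ennreal x + claims_upto W Y u \<omega> \<partial>M) = ennreal x + ennreal (lam * expectation (Y 0) * u)"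
        by (simp add: nn_integral_add emeasure_space_1 nn_integral_claims_upto u)
      also have "ennreal (\<delta> * exp (- \<delta> * u)) * \<dots> = ennreal (\<delta> * exp (- \<delta> * u) * (x + lam * expectation (Y 0) * u))"
        using assms lam_pos expectation_Y_nonneg u by (simp add: ennreal_plus ennreal_mult)
      finally show ?thesis using True by simp
    qed simp
  qed
  also have "\<dots> = ennreal ((x + lam * expectation (Y 0) * T) * exp (- \<delta> * T)
                + lam * expectation (Y 0) / \<delta> * exp (- \<delta> * T))"
    using assms lam_pos expectation_Y_nonneg by (intro nn_integral_exp_affine_tail) auto
  finally show ?thesis .
qed

lemma measurable_dividend_tail_bound [measurable]:
  "dividend_tail_bound \<delta> T x W Y \<in> borel_measurable M"
proof -
  have [measurable]: "Measurable.pred (M \<Otimes>\<^sub>M borel) (\<lambda>z. (\<Sum>j<Suc i. W j (fst z)) \<in> {..snd z})" for i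
    by (simp only: atMost_iff) measurable
  show ?thesis unfolding dividend_tail_bound_def claims_upto_def by measurable
qed

lemma AE_disc_dividends_le_horizon_add_tail:
  assumes "D \<in> admissible M W Y \<rho> x" and "\<delta> > 0" "\<rho> \<ge> 0" "T \<ge> 0"
  shows "AE \<omega> in M. disc_dividends \<delta> D (ruin_time (surplus W Y \<rho> x D) \<omega>) \<omega>
    \<le> disc_dividends \<delta> D (min (ruin_time (surplus W Y \<rho> x D) \<omega>) (ereal T)) \<omega>
      + dividend_tail_bound \<delta> T x W Y \<omega>"
  using AE_nonneg
  by (rule AE_mp[OF _ AE_I2]) (use assms in \<open>auto intro!: disc_dividends_le_horizon_add_tail\<close>)

end

lemma value_fn_mono:
  "H \<le> H' \<Longrightarrow> value_fn M W Y \<rho> \<delta> x H \<le> value_fn M W Y \<rho> \<delta> x H'"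
  unfolding value_fn_def
proof (rule SUP_mono)
  fix D assume "D \<in> admissible M W Y \<rho> x" and "H \<le> H'"
  then show "\<exists>D'\<in>admissible M W Y \<rho> x.
      (\<integral>\<^sup>+\<omega>. disc_dividends \<delta> D (min (ruin_time (surplus W Y \<rho> x D) \<omega>) H) \<omega> \<partial>M)
      \<le> (\<integral>\<^sup>+\<omega>. disc_dividends \<delta> D' (min (ruin_time (surplus W Y \<rho> x D') \<omega>) H') \<omega> \<partial>M)"
    by (intro bexI[of _ D] nn_integral_mono disc_dividends_mono min.mono order.refl)
qed

lemma value_fn_infinity_le:
  assumes [measurable]: "R \<in> borel_measurable M"
    and bound: "\<And>D. D \<in> admissible M W Y \<rho> x \<Longrightarrow>
      AE \<omega> in M. disc_dividends \<delta> D (ruin_time (surplus W Y \<rho> x D) \<omega>) \<omega>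
        \<le> disc_dividends \<delta> D (min (ruin_time (surplus W Y \<rho> x D) \<omega>) (ereal T)) \<omega> + R \<omega>"
  shows "value_fn M W Y \<rho> \<delta> x \<infinity> \<le> value_fn M W Y \<rho> \<delta> x (ereal T) + integral\<^sup>N M R"
  unfolding value_fn_def[of _ _ _ _ _ _ \<infinity>]
proof (rule SUP_least)
  fix D assume D: "D \<in> admissible M W Y \<rho> x"
  have "(\<integral>\<^sup>+\<omega>. disc_dividends \<delta> D (min (ruin_time (surplus W Y \<rho> x D) \<omega>) \<infinity>) \<omega> \<partial>M)
      \<le> (\<integral>\<^sup>+\<omega>. disc_dividends \<delta> D (min (ruin_time (surplus W Y \<rho> x D) \<omega>) (ereal T)) \<omega> + R \<omega> \<partial>M)"
    using bound[OF D] by (intro nn_integral_mono_AE) auto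
  also have "\<dots> \<le> (\<integral>\<^sup>+\<omega>. disc_dividends \<delta> D (min (ruin_time (surplus W Y \<rho> x D) \<omega>) (ereal T)) \<omega> \<partial>M)
      + integral\<^sup>N M R"
    by (rule nn_integral_add_le) measurable
  also have "\<dots> \<le> value_fn M W Y \<rho> \<delta> x (ereal T) + integral\<^sup>N M R"
    unfolding value_fn_def by (intro add_right_mono SUP_upper D)
  finally show "(\<integral>\<^sup>+\<omega>. disc_dividends \<delta> D (min (ruin_time (surplus W Y \<rho> x D) \<omega>) \<infinity>) \<omega> \<partial>M)
      \<le> value_fn M W Y \<rho> \<delta> x (ereal T) + integral\<^sup>N M R" .
qed

theorem theorem2p4:
  fixes M :: "'a measure" and W Y :: "nat \<Rightarrow> 'a \<Rightarrow> real" and p :: "real \<Rightarrow> real"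
    and \<rho> lam \<delta> x T :: real
  assumes "prob_space M"
    and "\<rho> > 0" and "lam > 0" and "\<delta> > 0"
    and "prob_space.indep_vars M (\<lambda>_. borel)
           (\<lambda>k. case k of Inl i \<Rightarrow> W i | Inr i \<Rightarrow> Y i) (UNIV :: (nat + nat) set)"
    and "\<And>i. distributed M lborel (W i) (\<lambda>s. ennreal (exponential_density lam s))"
    and "\<And>i. distributed M lborel (Y i) (\<lambda>y. ennreal (p y))"
    and "\<And>y. y \<le> 0 \<Longrightarrow> p y = 0"
    and "integrable M (Y 0)"
    and "lam * (\<integral>\<omega>. Y 0 \<omega> \<partial>M) > \<rho>"
    and "x > 0" and "T > 0"
  shows "value_fn M W Y \<rho> \<delta> x (ereal T) \<le> value_fn M W Y \<rho> \<delta> x \<infinity>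
            + ennreal ((x + lam * (\<integral>\<omega>. Y 0 \<omega> \<partial>M) * T) * exp (- \<delta> * T)
                       + lam * (\<integral>\<omega>. Y 0 \<omega> \<partial>M) / \<delta> * exp (- \<delta> * T))
       \<and> value_fn M W Y \<rho> \<delta> x \<infinity> \<le> value_fn M W Y \<rho> \<delta> x (ereal T)
            + ennreal ((x + lam * (\<integral>\<omega>. Y 0 \<omega> \<partial>M) * T) * exp (- \<delta> * T)
                       + lam * (\<integral>\<omega>. Y 0 \<omega> \<partial>M) / \<delta> * exp (- \<delta> * T))"
proof -
  interpret compound_poisson_model M W Y lam p
    using assms(1,3,5-9)
    by (simp add: compound_poisson_model_def compound_poisson_model_axioms_def)
  have "value_fn M W Y \<rho> \<delta> x \<infinity>
      \<le> value_fn M W Y \<rho> \<delta> x (ereal T) + integral\<^sup>N M (dividend_tail_bound \<delta> T x W Y)"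
    using assms by (intro value_fn_infinity_le AE_disc_dividends_le_horizon_add_tail) auto
  also have "integral\<^sup>N M (dividend_tail_bound \<delta> T x W Y)
      = ennreal ((x + lam * (\<integral>\<omega>. Y 0 \<omega> \<partial>M) * T) * exp (- \<delta> * T)
                 + lam * (\<integral>\<omega>. Y 0 \<omega> \<partial>M) / \<delta> * exp (- \<delta> * T))"
    using assms by (intro nn_integral_dividend_tail_bound) auto
  finally have "value_fn M W Y \<rho> \<delta> x \<infinity> \<le> value_fn M W Y \<rho> \<delta> x (ereal T)
      + ennreal ((x + lam * (\<integral>\<omega>. Y 0 \<omega> \<partial>M) * T) * exp (- \<delta> * T)
                 + lam * (\<integral>\<omega>. Y 0 \<omega> \<partial>M) / \<delta> * exp (- \<delta> * T))" .
  moreover have "value_fn M W Y \<rho> \<delta> x (ereal T) \<le> value_fn M W Y \<rho> \<delta> x \<infinity>"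
    by (rule value_fn_mono) simp
  ultimately show ?thesis
    by (simp add: add_increasing2)
qed

end
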